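(* Let $d\ge3$, $\{\mathbb{P}^u\}$ satisfy (P1), (P2), (D), (S1), (S2), fix $u$, $\eta=\eta(u)$. Let $\alpha\in(0,1/3)$, let $\omega$ be such that $\mathcal S_\infty$ is nonempty and connected and $R_{\mathrm{den}}(\omega,\alpha)<\infty$, and let $U_0\subseteq\mathcal S_\infty$. Let integers $\ell>\ell'$ satisfy $2^{\ell}>2^{\ell'}\ge R_{\mathrm{den}}(\omega,\alpha)$ and $r_{\alpha,2^{\ell'}}-2^\ell-2^{\ell'}>0$. (i) For any $x,x+y\in\mathcal S_\infty\cap B(0,r_{\alpha,2^\ell})$ connected by a path in $\mathcal S_\infty\cap B(0,r_{\alpha,2^\ell})$, $|\sigma^\omega_\ell(x)-\sigma^\omega_\ell(x+y)|\le c_{\mathrm{lip}}\widehat d_\omega(x,x+y)$ with $c_{\mathrm{lip}}=6\cdot2^{-\ell}/\eta$, where $\widehat d_\omega$ is the graph distance in $\mathcal S_\infty\cap B(0,r_{\alpha,2^\ell})$. (ii) For $x\in\mathcal S_\infty\cap B(0,r_{\alpha,2^{\ell'}}-2^\ell-2^{\ell'})$, $$(\sigma^\omega_{\ell'})^\omega_{x,\ell}\in\Big[\tfrac{1-\alpha}{1+\alpha}\sigma^\omega_\ell(x)-c_02^{\ell'-\ell},\ \tfrac{1+\alpha}{1-\alpha}\sigma^\omega_\ell(x)+c_02^{\ell'-\ell}\Big],\qquad c_0=\frac{3d\cdot2^{d-1}}{\eta}.$$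
   Context: Framework: $\Omega=\{0,1\}^{\mathbb{Z}^d}$; $\mathcal S=\{x:\omega(x)=1\}$ as nearest-neighbour subgraph; $\mathcal S_\infty$ vertices in infinite components; $B(x,r)$ closed $\ell^\infty$-ball in $\mathbb{Z}^d$. $\mathbb{P}^u$ satisfy (P1) ergodicity of shifts, (P2) monotonicity, (D) sprinkled decoupling $\mathbb{P}^u[A_1\cap A_2]\le\mathbb{P}^{u'}[A_1]\mathbb{P}^{u'}[A_2]+C\exp(-c\min\{(u'-u)^\beta s^\gamma,e^{(\log L)^\zeta}\})$ for increasing events depending on $B(x_i,L)$, $|x_1-x_2|_\infty=sL$, $u<u'$ (and reversed for decreasing events), (S1) local uniqueness with rate $f_S(u,R)\ge(\log R)^{1+\Delta_S(u)}$ (for large $R$; the events $\{\mathcal S_R\cap B(0,R)\ne\emptyset\}$ and $\{$all $x,y$ in $\mathcal S_{R/10}\cap B(0,R)$ connected in $\mathcal S\cap B(0,2R)\}$ have probability $\ge1-e^{-f_S(u,R)}$, $\mathcal S_r$ = vertices in components of $\ell^1$-diameter $\ge r$), (S2) $\eta(u)=\mathbb{P}^u[0\in\mathcal S_\infty]>0$ continuous. $\Delta_S=\Delta_S(u)$. Scales: $r_{\alpha,R}=\exp(\kappa_{\mathrm{reg}}(\alpha)(\log R)^{1+\Delta_S})$ with $\kappa_{\mathrm{reg}}(\alpha)>0$ a fixed function of $\alpha$ (namely $\frac1{2d}(\kappa_{d2}(\alpha)\wedge c_{hk6})$ for the volume large-deviation exponent $\kappa_{d2}$ and heat-kernel tail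 constant $c_{hk6}$). $R_{\mathrm{den}}(\omega,\alpha)=\inf\{R_0\ge1:\forall R\ge R_0,\forall x\in\mathcal S_\infty\cap B(0,r_{\alpha,R}),\ (1-\alpha)\eta\le|\mathcal S_\infty\cap B(x,R)|/|B(x,R)|\le(1+\alpha)\eta\}$. Densities: $U_1=\mathcal S_\infty\setminus U_0$; $\sigma^\omega_\ell(x)=|B(x,2^\ell)\cap U_1|/|B(x,2^\ell)\cap\mathcal S_\infty|$ for $x\in\mathbb{Z}^d$; for $f:\mathbb{Z}^d\to\mathbb{R}$, $(f)^\omega_{x,\ell}=|B(x,2^\ell)\cap\mathcal S_\infty|^{-1}\sum_{y\in B(x,2^\ell)\cap\mathcal S_\infty}f(y)$; convention $0/0=0$. *)

theory Defs
  imports "HOL-Probability.Probability"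
begin

section \<open>Lattice geometry on Z^d, with Z^d rendered as int ^ 'd (d = CARD('d))\<close>

type_synonym 'd config = "int ^ 'd \<Rightarrow> bool"

definition linf_ball :: "int ^ ('d::finite) \<Rightarrow> real \<Rightarrow> (int ^ 'd) set" where
  "linf_ball x r = {y. \<forall>i. real_of_int \<bar>y $ i - x $ i\<bar> \<le> r}"

definition linf_dist :: "int ^ ('d::finite) \<Rightarrow> int ^ 'd \<Rightarrow> int" where
  "linf_dist x y = Max (range (\<lambda>i. \<bar>x $ i - y $ i\<bar>))"

definition l1_dist :: "int ^ ('d::finite) \<Rightarrow> int ^ 'd \<Rightarrow> int" where
  "l1_dist x y = (\<Sum>i\<in>UNIV. \<bar>x $ i - y $ i\<bar>)"

definition nn_edges :: "(int ^ ('d::finite)) set \<Rightarrow> ((int ^ 'd) \<times> (int ^ 'd)) set" where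
  "nn_edges A = {(a, b). a \<in> A \<and> b \<in> A \<and> l1_dist a b = 1}"

definition conn_in :: "(int ^ ('d::finite)) set \<Rightarrow> int ^ 'd \<Rightarrow> int ^ 'd \<Rightarrow> bool" where
  "conn_in A x y \<longleftrightarrow> x \<in> A \<and> y \<in> A \<and> (x, y) \<in> (nn_edges A)\<^sup>*"

definition graph_dist :: "(int ^ ('d::finite)) set \<Rightarrow> int ^ 'd \<Rightarrow> int ^ 'd \<Rightarrow> nat" where
  "graph_dist A x y = (LEAST n. (x, y) \<in> (nn_edges A) ^^ n)"

definition set_connected :: "(int ^ ('d::finite)) set \<Rightarrow> bool" where
  "set_connected A \<longleftrightarrow> (\<forall>x\<in>A. \<forall>y\<in>A. conn_in A x y)"

definition occ :: "('d::finite) config \<Rightarrow> (int ^ 'd) set" where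
  "occ \<omega> = {x. \<omega> x}"

definition cluster :: "('d::finite) config \<Rightarrow> int ^ 'd \<Rightarrow> (int ^ 'd) set" where
  "cluster \<omega> x = {y. conn_in (occ \<omega>) x y}"

definition S_r :: "('d::finite) config \<Rightarrow> real \<Rightarrow> (int ^ 'd) set" where
  "S_r \<omega> r = {x \<in> occ \<omega>. \<exists>y\<in>cluster \<omega> x. \<exists>z\<in>cluster \<omega> x. real_of_int (l1_dist y z) \<ge> r}"

definition S_inf :: "('d::finite) config \<Rightarrow> (int ^ 'd) set" where
  "S_inf \<omega> = {x \<in> occ \<omega>. infinite (cluster \<omega> x)}"

definition shift :: "int ^ 'd \<Rightarrow> ('d::finite) config \<Rightarrow> 'd config" where
  "shift x \<omega> = (\<lambda>y. \<omega> (y + x))"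

definition increasing_event :: "('d::finite) config set \<Rightarrow> bool" where
  "increasing_event A \<longleftrightarrow> (\<forall>\<omega> \<omega>'. \<omega> \<in> A \<and> (\<forall>y. \<omega> y \<longrightarrow> \<omega>' y) \<longrightarrow> \<omega>' \<in> A)"

definition decreasing_event :: "('d::finite) config set \<Rightarrow> bool" where
  "decreasing_event A \<longleftrightarrow> (\<forall>\<omega> \<omega>'. \<omega>' \<in> A \<and> (\<forall>y. \<omega> y \<longrightarrow> \<omega>' y) \<longrightarrow> \<omega> \<in> A)"

definition depends_on :: "('d::finite) config set \<Rightarrow> (int ^ 'd) set \<Rightarrow> bool" where
  "depends_on A K \<longleftrightarrow> (\<forall>\<omega> \<omega>'. (\<forall>y\<in>K. \<omega> y = \<omega>' y) \<longrightarrow> (\<omega> \<in> A \<longleftrightarrow> \<omega>' \<in> A))"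

definition eta :: "(real \<Rightarrow> ('d::finite) config measure) \<Rightarrow> real \<Rightarrow> real" where
  "eta P u = measure (P u) {\<omega>. 0 \<in> S_inf \<omega>}"

definition config_measures :: "real set \<Rightarrow> (real \<Rightarrow> ('d::finite) config measure) \<Rightarrow> bool" where
  "config_measures U P \<longleftrightarrow> (\<forall>u\<in>U. prob_space (P u) \<and>
      sets (P u) = sets (Pi\<^sub>M UNIV (\<lambda>_. count_space (UNIV :: bool set))))"

definition axiom_P1 :: "real set \<Rightarrow> (real \<Rightarrow> ('d::finite) config measure) \<Rightarrow> bool" where
  "axiom_P1 U P \<longleftrightarrow> (\<forall>u\<in>U.
      (\<forall>x. \<forall>A\<in>sets (P u). measure (P u) (shift x -` A) = measure (P u) A) \<and>
      (\<forall>A\<in>sets (P u). (\<forall>x. shift x -` A = A) \<longrightarrow>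
          measure (P u) A = 0 \<or> measure (P u) A = 1))"

definition axiom_P2 :: "real set \<Rightarrow> (real \<Rightarrow> ('d::finite) config measure) \<Rightarrow> bool" where
  "axiom_P2 U P \<longleftrightarrow> (\<forall>u\<in>U. \<forall>u'\<in>U. u < u' \<longrightarrow>
      (\<forall>A\<in>sets (P u). increasing_event A \<longrightarrow> measure (P u) A \<le> measure (P u') A))"

definition decoupling_error :: "real \<Rightarrow> real \<Rightarrow> real \<Rightarrow> real \<Rightarrow> real \<Rightarrow> real \<Rightarrow> real \<Rightarrow> real \<Rightarrow> real" where
  "decoupling_error C c \<beta> \<gamma> \<zeta> du s L =
     C * exp (- c * min (du powr \<beta> * s powr \<gamma>) (exp (ln L powr \<zeta>)))"

definition axiom_D :: "real set \<Rightarrow> (real \<Rightarrow> ('d::finite) config measure) \<Rightarrow> bool" where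
  "axiom_D U P \<longleftrightarrow> (\<exists>C c \<beta> \<gamma> \<zeta> R_P L_P. C > 0 \<and> c > 0 \<and> \<beta> > 0 \<and> \<gamma> > 0 \<and> \<zeta> > 0 \<and>
     (\<forall>u\<in>U. \<forall>u'\<in>U. u < u' \<longrightarrow>
       (\<forall>(L::nat) s x1 x2 A1 A2. real L \<ge> L_P \<and> L \<ge> 1 \<and> s \<ge> R_P \<and>
          real_of_int (linf_dist x1 x2) = s * real L \<and>
          A1 \<in> sets (P u) \<and> A2 \<in> sets (P u) \<and>
          depends_on A1 (linf_ball x1 (real L)) \<and> depends_on A2 (linf_ball x2 (real L)) \<longrightarrow>
          (increasing_event A1 \<and> increasing_event A2 \<longrightarrow>
             measure (P u) (A1 \<inter> A2) \<le> measure (P u') A1 * measure (P u') A2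
               + decoupling_error C c \<beta> \<gamma> \<zeta> (u' - u) s (real L)) \<and>
          (decreasing_event A1 \<and> decreasing_event A2 \<longrightarrow>
             measure (P u') (A1 \<inter> A2) \<le> measure (P u) A1 * measure (P u) A2
               + decoupling_error C c \<beta> \<gamma> \<zeta> (u' - u) s (real L)))))"

definition LU_event1 :: "real \<Rightarrow> ('d::finite) config set" where
  "LU_event1 R = {\<omega>. S_r \<omega> R \<inter> linf_ball 0 R \<noteq> {}}"

definition LU_event2 :: "real \<Rightarrow> ('d::finite) config set" where
  "LU_event2 R = {\<omega>. \<forall>x\<in>S_r \<omega> (R / 10) \<inter> linf_ball 0 R. \<forall>y\<in>S_r \<omega> (R / 10) \<inter> linf_ball 0 R.
                        conn_in (occ \<omega> \<inter> linf_ball 0 (2 * R)) x y}"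

definition axiom_S1 :: "real set \<Rightarrow> (real \<Rightarrow> ('d::finite) config measure) \<Rightarrow> (real \<Rightarrow> real \<Rightarrow> real)
                         \<Rightarrow> (real \<Rightarrow> real) \<Rightarrow> bool" where
  "axiom_S1 U P f_S \<Delta>_S \<longleftrightarrow> (\<forall>u\<in>U. \<Delta>_S u > 0 \<and>
      (\<exists>R0. \<forall>R\<ge>R0. f_S u R \<ge> ln R powr (1 + \<Delta>_S u)) \<and>
      (\<forall>R\<ge>1. measure (P u) (LU_event1 R) \<ge> 1 - exp (- f_S u R) \<and>
              measure (P u) (LU_event2 R) \<ge> 1 - exp (- f_S u R)))"

definition axiom_S2 :: "real set \<Rightarrow> (real \<Rightarrow> ('d::finite) config measure) \<Rightarrow> bool" where
  "axiom_S2 U P \<longleftrightarrow> (\<forall>u\<in>U. eta P u > 0) \<and> continuous_on U (eta P)"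

definition r_scale :: "real \<Rightarrow> real \<Rightarrow> real \<Rightarrow> real" where
  "r_scale \<kappa> \<Delta> R = exp (\<kappa> * ln R powr (1 + \<Delta>))"

definition density_ok :: "real \<Rightarrow> real \<Rightarrow> real \<Rightarrow> real \<Rightarrow> ('d::finite) config \<Rightarrow> real \<Rightarrow> bool" where
  "density_ok \<eta> \<kappa> \<Delta> \<alpha> \<omega> R0 \<longleftrightarrow> R0 \<ge> 1 \<and> (\<forall>R\<ge>R0. \<forall>x\<in>S_inf \<omega> \<inter> linf_ball 0 (r_scale \<kappa> \<Delta> R).
      (1 - \<alpha>) * \<eta> \<le> real (card (S_inf \<omega> \<inter> linf_ball x R)) / real (card (linf_ball x R)) \<and>
      real (card (S_inf \<omega> \<inter> linf_ball x R)) / real (card (linf_ball x R)) \<le> (1 + \<alpha>) * \<eta>)"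

text \<open>R_den(omega, alpha) (an infimum; finiteness = the defining set is nonempty).\<close>
definition R_den :: "real \<Rightarrow> real \<Rightarrow> real \<Rightarrow> real \<Rightarrow> ('d::finite) config \<Rightarrow> real" where
  "R_den \<eta> \<kappa> \<Delta> \<alpha> \<omega> = Inf {R0. density_ok \<eta> \<kappa> \<Delta> \<alpha> \<omega> R0}"

definition R_den_finite :: "real \<Rightarrow> real \<Rightarrow> real \<Rightarrow> real \<Rightarrow> ('d::finite) config \<Rightarrow> bool" where
  "R_den_finite \<eta> \<kappa> \<Delta> \<alpha> \<omega> \<longleftrightarrow> (\<exists>R0. density_ok \<eta> \<kappa> \<Delta> \<alpha> \<omega> R0)"

text \<open>sigma_l(x) = |B(x,2^l) \<inter> U_1| / |B(x,2^l) \<inter> S_inf|, with U_1 = S_inf - U_0 (0/0 = 0).\<close>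
definition sigma :: "('d::finite) config \<Rightarrow> (int ^ 'd) set \<Rightarrow> int \<Rightarrow> int ^ 'd \<Rightarrow> real" where
  "sigma \<omega> U0 l x =
     real (card (linf_ball x (2 powr real_of_int l) \<inter> (S_inf \<omega> - U0)))
     / real (card (linf_ball x (2 powr real_of_int l) \<inter> S_inf \<omega>))"

text \<open>(f)_{x,l}: average of f over B(x,2^l) \<inter> S_inf (0/0 = 0).\<close>
definition avg :: "('d::finite) config \<Rightarrow> (int ^ 'd \<Rightarrow> real) \<Rightarrow> int ^ 'd \<Rightarrow> int \<Rightarrow> real" where
  "avg \<omega> f x l =
     (\<Sum>y\<in>linf_ball x (2 powr real_of_int l) \<inter> S_inf \<omega>. f y)
     / real (card (linf_ball x (2 powr real_of_int l) \<inter> S_inf \<omega>))"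

end

theory Submission
  imports Defs
begin

(* Both parts are counting arguments in l-infinity balls. Above R_den, every ball B(w,R) centred
   at a point of S_inf in the regular region contains between (1 - alpha) eta |B(w,R)| and
   (1 + alpha) eta |B(w,R)| points of S_inf.

   (i) Moving the centre by one lattice step changes B(w,2^l) only in a face of (2 2^l + 1)^(d-1)
   sites, so numerator and denominator of sigma_l change by at most that much, while the
   denominator is at least (1 - alpha) eta (2 2^l + 1)^d; summing along a path gives the bound.

   (ii) Write m = 2^l, k = 2^l' and U1 = S_inf - U0. Summing |B(y,k) \<inter> U1| over y in
   B(x,m) \<inter> S_inf counts every w in U1 with multiplicity |B(w,k) \<inter> B(x,m) \<inter> S_inf|, which
   equals |B(w,k) \<inter> S_inf| for w in B(x,m-k) and is at most that for w in B(x,m+k). The density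
   bounds therefore compare the average of sigma_l' with the number of points of U1 in B(x,m-k)
   and in B(x,m+k), and these differ from |B(x,m) \<inter> U1| by annuli whose volume is at most
   d 2^(d-1) (k/m) |B(x,m)|. *)

definition lattice_box :: "('d::finite \<Rightarrow> int) \<Rightarrow> ('d \<Rightarrow> int) \<Rightarrow> (int ^ 'd) set" where
  "lattice_box lo hi = {y. \<forall>i. lo i \<le> y $ i \<and> y $ i \<le> hi i}"

lemma bij_betw_vec_nth_lattice_box:
  "bij_betw vec_nth (lattice_box lo hi) (PiE UNIV (\<lambda>i. {lo i..hi i}))"
proof (rule bij_betw_byWitness[where f'=vec_lambda])
  show "\<forall>a'\<in>PiE UNIV (\<lambda>i. {lo i..hi i}). vec_nth (vec_lambda a') = a'"
    using vec_lambda_inverse by auto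
  show "vec_lambda ` PiE UNIV (\<lambda>i. {lo i..hi i}) \<subseteq> lattice_box lo hi"
    by (auto simp: lattice_box_def PiE_def Pi_def)
qed (auto simp: lattice_box_def)

lemma card_lattice_box: "card (lattice_box lo hi) = (\<Prod>i\<in>UNIV. nat (hi i - lo i + 1))"
  using bij_betw_same_card[OF bij_betw_vec_nth_lattice_box] by (simp add: card_PiE)

lemma finite_lattice_box: "finite (lattice_box lo hi)"
  using bij_betw_finite[OF bij_betw_vec_nth_lattice_box] by (simp add: finite_PiE)

lemma mem_linf_ball_nat: "y \<in> linf_ball x (real k) \<longleftrightarrow> (\<forall>i. \<bar>y $ i - x $ i\<bar> \<le> int k)"
  unfolding linf_ball_def mem_Collect_eq by (metis of_int_le_iff of_int_of_nat_eq)

lemma linf_ball_eq_lattice_box: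
  "linf_ball x (real k) = lattice_box (\<lambda>i. x $ i - int k) (\<lambda>i. x $ i + int k)"
proof -
  have "\<bar>a - b\<bar> \<le> int k \<longleftrightarrow> b - int k \<le> a \<and> a \<le> b + int k" for a b :: int
    by arith
  then show ?thesis
    by (simp add: mem_linf_ball_nat lattice_box_def set_eq_iff)
qed

lemma card_linf_ball: "card (linf_ball (x :: int ^ 'd::finite) (real k)) = (2 * k + 1) ^ CARD('d)"
  by (simp add: linf_ball_eq_lattice_box card_lattice_box nat_add_distrib nat_mult_distrib)

lemma linf_ball_mono: "r \<le> s \<Longrightarrow> linf_ball x r \<subseteq> linf_ball x s"
  unfolding linf_ball_def subset_iff mem_Collect_eq by (meson order_trans)

lemma finite_linf_ball: "finite (linf_ball x r)"
proof -
  have "linf_ball x r \<subseteq> linf_ball x (real (nat \<lceil>r\<rceil>))"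
    by (rule linf_ball_mono) (rule real_nat_ceiling_ge)
  moreover have "finite (linf_ball x (real (nat \<lceil>r\<rceil>)))"
    unfolding linf_ball_eq_lattice_box by (rule finite_lattice_box)
  ultimately show ?thesis
    by (rule finite_subset)
qed

lemma linf_ball_floor: "linf_ball x r = linf_ball x (real_of_int \<lfloor>r\<rfloor>)"
  unfolding linf_ball_def by (simp add: le_floor_iff del: of_int_abs)

lemma mem_linf_ball_commute: "y \<in> linf_ball x r \<longleftrightarrow> x \<in> linf_ball y r"
  unfolding linf_ball_def by (simp add: abs_minus_commute)

lemma linf_ball_triangle: "y \<in> linf_ball x a \<Longrightarrow> w \<in> linf_ball y b \<Longrightarrow> w \<in> linf_ball x (a + b)"
  unfolding linf_ball_def
proof (clarify)
  fix i
  assume "\<forall>i. real_of_int \<bar>y $ i - x $ i\<bar> \<le> a" "\<forall>i. real_of_int \<bar>w $ i - y $ i\<bar> \<le> b"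
  then have "real_of_int \<bar>y $ i - x $ i\<bar> \<le> a" "real_of_int \<bar>w $ i - y $ i\<bar> \<le> b"
    by blast+
  moreover have "\<bar>w $ i - x $ i\<bar> \<le> \<bar>w $ i - y $ i\<bar> + \<bar>y $ i - x $ i\<bar>"
    by arith
  ultimately show "real_of_int \<bar>w $ i - x $ i\<bar> \<le> a + b"
    by (smt (verit) of_int_add of_int_le_iff)
qed

lemma l1_dist_commute: "l1_dist a b = l1_dist b a"
  unfolding l1_dist_def by (simp add: abs_minus_commute)

lemma l1_dist_eq_1E:
  fixes a b :: "int ^ 'd::finite"
  assumes "l1_dist a b = 1"
  obtains j where "\<And>i. i \<noteq> j \<Longrightarrow> a $ i = b $ i" "\<bar>a $ j - b $ j\<bar> = 1"
proof -
  have "\<exists>j. a $ j \<noteq> b $ j"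
  proof (rule ccontr)
    assume "\<nexists>j. a $ j \<noteq> b $ j"
    then have "l1_dist a b = 0"
      unfolding l1_dist_def by simp
    then show False
      using assms by simp
  qed
  then obtain j where j: "a $ j \<noteq> b $ j"
    by blast
  have single: "\<bar>a $ i - b $ i\<bar> + \<bar>a $ j - b $ j\<bar> \<le> 1" if "i \<noteq> j" for i
  proof -
    have "(\<Sum>k\<in>{i, j}. \<bar>a $ k - b $ k\<bar>) \<le> (\<Sum>k\<in>UNIV. \<bar>a $ k - b $ k\<bar>)"
      by (rule sum_mono2) auto
    then show ?thesis
      using that assms unfolding l1_dist_def by simp
  qed
  have "\<bar>a $ j - b $ j\<bar> \<le> 1"
    using member_le_sum[of j UNIV "\<lambda>i. \<bar>a $ i - b $ i\<bar>"] assms unfolding l1_dist_def by simp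
  moreover have "\<bar>a $ j - b $ j\<bar> \<ge> 1"
    using j by arith
  ultimately show ?thesis
    using that single by force
qed

text \<open>The sites of B(a,k) not in B(b,k) for a neighbour b form one face of the box B(a,k).\<close>
lemma card_linf_ball_diff_adjacent:
  fixes a b :: "int ^ 'd::finite"
  assumes "l1_dist a b = 1"
  shows "card (linf_ball a (real k) - linf_ball b (real k)) \<le> (2 * k + 1) ^ (CARD('d) - 1)"
proof -
  obtain j where same: "\<And>i. i \<noteq> j \<Longrightarrow> a $ i = b $ i" and step: "\<bar>a $ j - b $ j\<bar> = 1"
    using l1_dist_eq_1E[OF assms] by blast
  define c where "c = a $ j - (b $ j - a $ j) * int k"
  define lo where "lo = (\<lambda>i. if i = j then c else a $ i - int k)"
  define hi where "hi = (\<lambda>i. if i = j then c else a $ i + int k)"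
  have "linf_ball a (real k) - linf_ball b (real k) \<subseteq> lattice_box lo hi"
  proof
    fix y assume y: "y \<in> linf_ball a (real k) - linf_ball b (real k)"
    then have near_a: "\<bar>y $ i - a $ i\<bar> \<le> int k" for i
      by (simp add: mem_linf_ball_nat)
    from y obtain i where far_b: "\<bar>y $ i - b $ i\<bar> > int k"
      by (auto simp: mem_linf_ball_nat not_le)
    moreover have "i = j"
      using far_b near_a[of i] same[of i] by fastforce
    ultimately have far_b_j: "\<bar>y $ j - b $ j\<bar> > int k"
      by simp
    consider "b $ j - a $ j = 1" | "b $ j - a $ j = -1"
      using step by arith
    then have "y $ j = c"
      unfolding c_def using far_b_j near_a[of j] by cases (simp; arith)+
    then have "lo i \<le> y $ i \<and> y $ i \<le> hi i" for i
      using near_a[of i] by (auto simp: lo_def hi_def abs_le_iff)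
    then show "y \<in> lattice_box lo hi"
      by (simp add: lattice_box_def)
  qed
  then have "card (linf_ball a (real k) - linf_ball b (real k)) \<le> card (lattice_box lo hi)"
    by (rule card_mono[OF finite_lattice_box])
  also have "card (lattice_box lo hi) = (\<Prod>i\<in>UNIV. if i = j then 1 else 2 * k + 1)"
    unfolding card_lattice_box lo_def hi_def
    by (intro prod.cong) (auto simp: nat_add_distrib nat_mult_distrib)
  also have "\<dots> = (2 * k + 1) ^ (CARD('d) - 1)"
    by (simp add: prod.If_cases Compl_eq_Diff_UNIV card_Diff_singleton)
  finally show ?thesis .
qed

lemma power_diff_le_mult_power:
  fixes x y :: "'a::linordered_idom"
  assumes "0 \<le> y" "y \<le> x"
  shows "x ^ n - y ^ n \<le> of_nat n * (x - y) * x ^ (n - 1)"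
proof -
  have "(\<Sum>i<n. y ^ (n - Suc i) * x ^ i) \<le> (\<Sum>i<n. x ^ (n - Suc i) * x ^ i)"
    using assms by (intro sum_mono mult_right_mono power_mono) auto
  also have "\<dots> = of_nat n * x ^ (n - 1)"
    by (simp add: power_add[symmetric])
  finally have "(\<Sum>i<n. y ^ (n - Suc i) * x ^ i) \<le> of_nat n * x ^ (n - 1)" .
  then have "(x - y) * (\<Sum>i<n. y ^ (n - Suc i) * x ^ i) \<le> (x - y) * (of_nat n * x ^ (n - 1))"
    using assms by (intro mult_left_mono) auto
  then show ?thesis
    by (simp add: power_diff_sumr2[of x n y] ac_simps)
qed

lemma card_linf_ball_annulus_le:
  fixes x :: "int ^ 'd::finite"
  assumes "j + k \<le> 2 * m" "0 < m"
  shows "real (card (linf_ball x (real (j + k)) - linf_ball x (real j)))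
    \<le> 2 ^ (CARD('d) - 1) * real CARD('d) * (real k / real m) * real ((2 * m + 1) ^ CARD('d))"
proof -
  let ?d = "CARD('d)"
  have inner: "linf_ball x (real j) \<subseteq> linf_ball x (real (j + k))"
    by (rule linf_ball_mono) simp
  have "card (linf_ball x (real (j + k)) - linf_ball x (real j)) = (2 * (j + k) + 1) ^ ?d - (2 * j + 1) ^ ?d"
    unfolding card_Diff_subset[OF finite_linf_ball inner] card_linf_ball ..
  moreover have "(2 * j + 1) ^ ?d \<le> (2 * (j + k) + 1) ^ ?d"
    by (rule power_mono) auto
  ultimately have "real (card (linf_ball x (real (j + k)) - linf_ball x (real j)))
      = real (2 * (j + k) + 1) ^ ?d - real (2 * j + 1) ^ ?d"
    by (simp only: of_nat_diff of_nat_power)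
  also have "\<dots> \<le> real ?d * (2 * real k) * real (2 * (j + k) + 1) ^ (?d - 1)"
    using power_diff_le_mult_power[of "real (2 * j + 1)" "real (2 * (j + k) + 1)" ?d] by simp
  also have "\<dots> \<le> real ?d * (2 * real k) * (2 * (2 * real m + 1)) ^ (?d - 1)"
    using assms by (intro mult_left_mono power_mono) auto
  also have "\<dots> = real ?d * (2 * real k) * (2 ^ (?d - 1) * (2 * real m + 1) ^ (?d - 1))"
    by (simp only: power_mult_distrib)
  also have "\<dots> = 2 ^ (?d - 1) * real ?d * (real k / real m) * ((2 * real m) * (2 * real m + 1) ^ (?d - 1))"
    using assms by (simp add: field_simps)
  also have "\<dots> \<le> 2 ^ (?d - 1) * real ?d * (real k / real m) * ((2 * real m + 1) * (2 * real m + 1) ^ (?d - 1))"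
    by (intro mult_left_mono mult_right_mono) auto
  also have "(2 * real m + 1) * (2 * real m + 1) ^ (?d - 1) = real ((2 * m + 1) ^ ?d)"
    using power_Suc[of "2 * real m + 1" "?d - 1"] by (simp add: ac_simps)
  finally show ?thesis .
qed

lemma r_scale_mono:
  assumes "0 < \<kappa>" "0 < \<Delta>" "1 \<le> R" "R \<le> R'"
  shows "r_scale \<kappa> \<Delta> R \<le> r_scale \<kappa> \<Delta> R'"
proof -
  have "ln R powr (1 + \<Delta>) \<le> ln R' powr (1 + \<Delta>)"
    using assms by (intro powr_mono2) auto
  then show ?thesis
    unfolding r_scale_def using assms by simp
qed

lemma R_den_ge_1:
  assumes "R_den_finite \<eta> \<kappa> \<Delta> \<alpha> \<omega>"
  shows "1 \<le> R_den \<eta> \<kappa> \<Delta> \<alpha> \<omega>"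
  using assms unfolding R_den_def R_den_finite_def
  by (intro cInf_greatest) (auto simp: density_ok_def)

text \<open>Some admissible R0 lies below \<lfloor>R\<rfloor> + 1, and the balls of radius max R0 R coincide with
  those of radius R.\<close>
lemma density_ok_R_den:
  assumes fin: "R_den_finite \<eta> \<kappa> \<Delta> \<alpha> \<omega>" and "0 < \<kappa>" "0 < \<Delta>"
  shows "density_ok \<eta> \<kappa> \<Delta> \<alpha> \<omega> (R_den \<eta> \<kappa> \<Delta> \<alpha> \<omega>)"
  unfolding density_ok_def
proof (intro conjI allI impI ballI)
  show "1 \<le> R_den \<eta> \<kappa> \<Delta> \<alpha> \<omega>"
    using fin by (rule R_den_ge_1)
  fix R x
  assume R: "R_den \<eta> \<kappa> \<Delta> \<alpha> \<omega> \<le> R" and x: "x \<in> S_inf \<omega> \<inter> linf_ball 0 (r_scale \<kappa> \<Delta> R)"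
  have admissible: "{R0. density_ok \<eta> \<kappa> \<Delta> \<alpha> \<omega> R0} \<noteq> {}"
    using fin unfolding R_den_finite_def by blast
  have "Inf {R0. density_ok \<eta> \<kappa> \<Delta> \<alpha> \<omega> R0} < real_of_int \<lfloor>R\<rfloor> + 1"
    using R unfolding R_den_def by linarith
  then obtain R0 where R0: "density_ok \<eta> \<kappa> \<Delta> \<alpha> \<omega> R0" "R0 < real_of_int \<lfloor>R\<rfloor> + 1"
    using cInf_lessD[OF admissible] by blast
  define R' where "R' = max R0 R"
  have "R \<le> R'" "R0 \<le> R'" "R' < real_of_int \<lfloor>R\<rfloor> + 1"
    unfolding R'_def using R0(2) by auto
  then have "\<lfloor>R'\<rfloor> = \<lfloor>R\<rfloor>"
    using of_int_floor_le[of R] by (intro floor_unique) linarith+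
  then have same_balls: "linf_ball y R' = linf_ball y R" for y
    by (simp only: linf_ball_floor[of y R'] linf_ball_floor[of y R])
  have "1 \<le> R"
    using R R_den_ge_1[OF fin] by linarith
  then have "r_scale \<kappa> \<Delta> R \<le> r_scale \<kappa> \<Delta> R'"
    using assms \<open>R \<le> R'\<close> by (intro r_scale_mono) auto
  then have "x \<in> S_inf \<omega> \<inter> linf_ball 0 (r_scale \<kappa> \<Delta> R')"
    using x linf_ball_mono by blast
  then have "(1 - \<alpha>) * \<eta> \<le> real (card (S_inf \<omega> \<inter> linf_ball x R')) / real (card (linf_ball x R'))
      \<and> real (card (S_inf \<omega> \<inter> linf_ball x R')) / real (card (linf_ball x R')) \<le> (1 + \<alpha>) * \<eta>"
    using R0(1) \<open>R0 \<le> R'\<close> unfolding density_ok_def by blast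
  then show "(1 - \<alpha>) * \<eta> \<le> real (card (S_inf \<omega> \<inter> linf_ball x R)) / real (card (linf_ball x R))"
    and "real (card (S_inf \<omega> \<inter> linf_ball x R)) / real (card (linf_ball x R)) \<le> (1 + \<alpha>) * \<eta>"
    unfolding same_balls by simp_all
qed

lemma card_S_inf_linf_ball_bounds:
  fixes \<omega> :: "('d::finite) config"
  assumes fin: "R_den_finite \<eta> \<kappa> \<Delta> \<alpha> \<omega>" and "0 < \<kappa>" "0 < \<Delta>"
    and k: "R_den \<eta> \<kappa> \<Delta> \<alpha> \<omega> \<le> real k"
    and x: "x \<in> S_inf \<omega>" "x \<in> linf_ball 0 (r_scale \<kappa> \<Delta> (real k))"
  shows "(1 - \<alpha>) * \<eta> * real ((2 * k + 1) ^ CARD('d)) \<le> real (card (linf_ball x (real k) \<inter> S_inf \<omega>))"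
    and "real (card (linf_ball x (real k) \<inter> S_inf \<omega>)) \<le> (1 + \<alpha>) * \<eta> * real ((2 * k + 1) ^ CARD('d))"
proof -
  have "\<forall>R\<ge>R_den \<eta> \<kappa> \<Delta> \<alpha> \<omega>. \<forall>x\<in>S_inf \<omega> \<inter> linf_ball 0 (r_scale \<kappa> \<Delta> R).
      (1 - \<alpha>) * \<eta> \<le> real (card (S_inf \<omega> \<inter> linf_ball x R)) / real (card (linf_ball x R))
    \<and> real (card (S_inf \<omega> \<inter> linf_ball x R)) / real (card (linf_ball x R)) \<le> (1 + \<alpha>) * \<eta>"
    using density_ok_R_den[OF assms(1-3)] unfolding density_ok_def by (rule conjunct2)
  then have "(1 - \<alpha>) * \<eta> \<le> real (card (S_inf \<omega> \<inter> linf_ball x (real k))) / real (card (linf_ball x (real k)))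
    \<and> real (card (S_inf \<omega> \<inter> linf_ball x (real k))) / real (card (linf_ball x (real k))) \<le> (1 + \<alpha>) * \<eta>"
    using k x by blast
  then show "(1 - \<alpha>) * \<eta> * real ((2 * k + 1) ^ CARD('d)) \<le> real (card (linf_ball x (real k) \<inter> S_inf \<omega>))"
    and "real (card (linf_ball x (real k) \<inter> S_inf \<omega>)) \<le> (1 + \<alpha>) * \<eta> * real ((2 * k + 1) ^ CARD('d))"
    unfolding card_linf_ball by (simp_all add: Int_commute pos_le_divide_eq pos_divide_le_eq del: of_nat_power)
qed

definition ball_fraction :: "(int ^ 'd::finite) set \<Rightarrow> (int ^ 'd) set \<Rightarrow> real \<Rightarrow> int ^ 'd \<Rightarrow> real" where
  "ball_fraction S U r y = real (card (linf_ball y r \<inter> U)) / real (card (linf_ball y r \<inter> S))"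

lemma sigma_eq_ball_fraction:
  "sigma \<omega> U0 l = ball_fraction (S_inf \<omega>) (S_inf \<omega> - U0) (2 powr real_of_int l)"
  by (simp add: fun_eq_iff sigma_def ball_fraction_def)

lemma abs_divide_diff_divide_le:
  fixes a b p q s n :: real
  assumes "0 \<le> b" "b \<le> q" "\<bar>a - b\<bar> \<le> s" "\<bar>p - q\<bar> \<le> s" "0 < n" "n \<le> p" "n \<le> q"
  shows "\<bar>a / p - b / q\<bar> \<le> 2 * s / n"
proof -
  have pos: "0 < p" "0 < q"
    using assms by linarith+
  have "\<bar>a - b\<bar> * q \<le> s * q"
    using assms pos by (intro mult_right_mono) auto
  moreover have "b * \<bar>q - p\<bar> \<le> q * s"
    using assms by (intro mult_mono) (auto simp: abs_minus_commute)
  moreover have "\<bar>(a - b) * q + b * (q - p)\<bar> \<le> \<bar>a - b\<bar> * q + b * \<bar>q - p\<bar>"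
    using abs_triangle_ineq[of "(a - b) * q" "b * (q - p)"] assms pos by (simp add: abs_mult)
  ultimately have "\<bar>(a - b) * q + b * (q - p)\<bar> \<le> s * q + q * s"
    by linarith
  then have "\<bar>a / p - b / q\<bar> \<le> 2 * s * q / (p * q)"
    using pos by (simp add: divide_simps abs_divide abs_mult) (simp add: algebra_simps)
  also have "\<dots> = 2 * s / p"
    using pos by simp
  also have "\<dots> \<le> 2 * s / n"
    using assms pos by (intro divide_left_mono) auto
  finally show ?thesis .
qed

lemma ball_fraction_adjacent_diff:
  fixes S U :: "(int ^ 'd::finite) set"
  assumes "U \<subseteq> S" "l1_dist a b = 1" "0 < N"
    and "N \<le> real (card (linf_ball a (real k) \<inter> S))" "N \<le> real (card (linf_ball b (real k) \<inter> S))"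
  shows "\<bar>ball_fraction S U (real k) a - ball_fraction S U (real k) b\<bar> \<le> 2 * real ((2 * k + 1) ^ (CARD('d) - 1)) / N"
proof -
  let ?s = "(2 * k + 1) ^ (CARD('d) - 1)"
  have shift: "card (linf_ball p (real k) \<inter> X) \<le> card (linf_ball q (real k) \<inter> X) + ?s"
    if "l1_dist p q = 1" for p q :: "int ^ 'd" and X
  proof -
    have "linf_ball p (real k) \<inter> X \<subseteq> (linf_ball q (real k) \<inter> X) \<union> (linf_ball p (real k) - linf_ball q (real k))"
      by blast
    then have "card (linf_ball p (real k) \<inter> X)
        \<le> card (linf_ball q (real k) \<inter> X) + card (linf_ball p (real k) - linf_ball q (real k))"
      by (meson card_Un_le card_mono finite_Diff finite_Int finite_UnI finite_linf_ball order_trans)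
    then show ?thesis
      using card_linf_ball_diff_adjacent[OF that, of k] by linarith
  qed
  have "l1_dist b a = 1"
    using assms(2) by (simp add: l1_dist_commute)
  then have close: "\<bar>real (card (linf_ball a (real k) \<inter> X)) - real (card (linf_ball b (real k) \<inter> X))\<bar> \<le> real ?s" for X
    using shift[OF assms(2), of X] shift[of b a X] by linarith
  have "card (linf_ball b (real k) \<inter> U) \<le> card (linf_ball b (real k) \<inter> S)"
    using assms(1) by (intro card_mono) (auto intro: finite_linf_ball)
  then show ?thesis
    unfolding ball_fraction_def using assms(3-5)
    by (intro abs_divide_diff_divide_le[OF _ _ close close]) auto
qed

lemma abs_diff_le_relpow:
  fixes f :: "'a \<Rightarrow> real"
  assumes "\<And>a b. (a, b) \<in> E \<Longrightarrow> \<bar>f a - f b\<bar> \<le> c" and "(x, z) \<in> E ^^ n"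
  shows "\<bar>f x - f z\<bar> \<le> c * real n"
  using assms(2)
proof (induction n arbitrary: z)
  case 0
  then show ?case by simp
next
  case (Suc n)
  then obtain y where "(x, y) \<in> E ^^ n" "(y, z) \<in> E"
    by auto
  then have "\<bar>f x - f y\<bar> \<le> c * real n" "\<bar>f y - f z\<bar> \<le> c"
    using Suc.IH assms(1) by blast+
  then show ?case
    by (simp add: algebra_simps)
qed

lemma graph_dist_relpow:
  assumes "conn_in A x z"
  shows "(x, z) \<in> nn_edges A ^^ graph_dist A x z"
proof -
  have "\<exists>n. (x, z) \<in> nn_edges A ^^ n"
    using assms unfolding conn_in_def by (simp add: rtrancl_power)
  then show ?thesis
    unfolding graph_dist_def by (rule LeastI_ex)
qed

lemma ball_fraction_graph_lipschitz:
  fixes S U A :: "(int ^ 'd::finite) set"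
  assumes "U \<subseteq> S" "\<alpha> < 1/3" "0 < \<eta>" "0 < m"
    and dense: "\<forall>w\<in>A. (1 - \<alpha>) * \<eta> * real ((2 * m + 1) ^ CARD('d)) \<le> real (card (linf_ball w (real m) \<inter> S))"
    and "conn_in A x z"
  shows "\<bar>ball_fraction S U (real m) x - ball_fraction S U (real m) z\<bar> \<le> 6 / (\<eta> * real m) * real (graph_dist A x z)"
proof -
  let ?N = "(1 - \<alpha>) * \<eta> * real ((2 * m + 1) ^ CARD('d))"
  have "2 * real ((2 * m + 1) ^ (CARD('d) - 1)) / ?N = 2 / ((1 - \<alpha>) * \<eta> * (2 * real m + 1))"
    using power_Suc[of "2 * real m + 1" "CARD('d) - 1"] assms(3) by (simp add: ac_simps)
  also have "\<dots> \<le> 6 / (\<eta> * real m)"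
  proof (rule frac_le)
    have "2 / 3 * (\<eta> * (2 * real m + 1)) \<le> (1 - \<alpha>) * (\<eta> * (2 * real m + 1))"
      using assms(2,3) by (intro mult_right_mono) auto
    moreover have "\<eta> * real m \<le> \<eta> * (2 / 3 * (2 * real m + 1))"
      using assms(3) by (intro mult_left_mono) auto
    ultimately show "\<eta> * real m \<le> (1 - \<alpha>) * \<eta> * (2 * real m + 1)"
      by (simp add: algebra_simps)
  qed (use assms(3,4) in auto)
  finally have edge_bound: "2 * real ((2 * m + 1) ^ (CARD('d) - 1)) / ?N \<le> 6 / (\<eta> * real m)" .
  have "0 < ?N"
    using assms(2,3) by simp
  have edge: "\<bar>ball_fraction S U (real m) a - ball_fraction S U (real m) b\<bar> \<le> 6 / (\<eta> * real m)"
    if "(a, b) \<in> nn_edges A" for a b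
  proof -
    have "a \<in> A" "b \<in> A" "l1_dist a b = 1"
      using that unfolding nn_edges_def by auto
    then have "\<bar>ball_fraction S U (real m) a - ball_fraction S U (real m) b\<bar>
        \<le> 2 * real ((2 * m + 1) ^ (CARD('d) - 1)) / ?N"
      using dense by (intro ball_fraction_adjacent_diff[OF assms(1)] \<open>0 < ?N\<close>) auto
    then show ?thesis
      using edge_bound by linarith
  qed
  show ?thesis
    by (rule abs_diff_le_relpow[OF edge graph_dist_relpow[OF assms(6)]])
qed

text \<open>Double counting of the pairs (y, z) with y \<in> A, z \<in> B and |y - z| \<le> b, where y ranges
  over B(x,a); all partners z then lie in B(x,a+b).\<close>
lemma sum_card_linf_ball_inter_le:
  fixes A B :: "(int ^ 'd::finite) set"
  shows "(\<Sum>y\<in>linf_ball x a \<inter> A. card (linf_ball y b \<inter> B))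
    \<le> (\<Sum>z\<in>linf_ball x (a + b) \<inter> B. card (linf_ball z b \<inter> A))"
proof -
  let ?Y = "linf_ball x a \<inter> A" and ?Z = "linf_ball x (a + b) \<inter> B"
  have fin: "finite ?Y" "finite ?Z"
    by (simp_all add: finite_linf_ball)
  have "linf_ball y b \<inter> B = {z \<in> ?Z. z \<in> linf_ball y b}" if "y \<in> ?Y" for y
    using that linf_ball_triangle by blast
  then have "(\<Sum>y\<in>?Y. card (linf_ball y b \<inter> B)) = (\<Sum>y\<in>?Y. card {z \<in> ?Z. z \<in> linf_ball y b})"
    by (intro sum.cong) simp_all
  also have "\<dots> = (\<Sum>z\<in>?Z. card {y \<in> ?Y. z \<in> linf_ball y b})"
    using sum.swap_restrict[OF fin, of "\<lambda>_ _. 1::nat"] by simp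
  also have "\<dots> \<le> (\<Sum>z\<in>?Z. card (linf_ball z b \<inter> A))"
    by (intro sum_mono card_mono) (auto simp: finite_linf_ball mem_linf_ball_commute)
  finally show ?thesis .
qed

lemma sum_ball_fraction_ge:
  fixes S U :: "(int ^ 'd::finite) set"
  assumes "U \<subseteq> S" "0 < lo" "lo \<le> hi" "0 < N" "0 \<le> b"
    and dense: "\<forall>w\<in>S \<inter> linf_ball x (a + b).
      lo * N \<le> real (card (linf_ball w b \<inter> S)) \<and> real (card (linf_ball w b \<inter> S)) \<le> hi * N"
  shows "lo / hi * real (card (linf_ball x a \<inter> U)) \<le> (\<Sum>y\<in>linf_ball x (a + b) \<inter> S. ball_fraction S U b y)"
proof -
  have inner: "linf_ball x a \<subseteq> linf_ball x (a + b)"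
    using assms(5) by (intro linf_ball_mono) simp
  have "(\<Sum>w\<in>linf_ball x a \<inter> U. lo * N) \<le> (\<Sum>w\<in>linf_ball x a \<inter> U. real (card (linf_ball w b \<inter> S)))"
  proof (rule sum_mono)
    fix w assume "w \<in> linf_ball x a \<inter> U"
    then have "w \<in> S \<inter> linf_ball x (a + b)"
      using inner assms(1) by blast
    then show "lo * N \<le> real (card (linf_ball w b \<inter> S))"
      using dense by blast
  qed
  then have "lo * N * real (card (linf_ball x a \<inter> U)) \<le> (\<Sum>w\<in>linf_ball x a \<inter> U. real (card (linf_ball w b \<inter> S)))"
    by (simp add: mult.commute)
  also have "\<dots> \<le> (\<Sum>y\<in>linf_ball x (a + b) \<inter> S. real (card (linf_ball y b \<inter> U)))"
    using sum_card_linf_ball_inter_le[where A = U and B = S] by (simp flip: of_nat_sum)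
  finally have "lo / hi * real (card (linf_ball x a \<inter> U))
      \<le> (\<Sum>y\<in>linf_ball x (a + b) \<inter> S. real (card (linf_ball y b \<inter> U)) / (hi * N))"
    using assms(2-4) by (simp add: sum_divide_distrib[symmetric] field_simps)
  also have "\<dots> \<le> (\<Sum>y\<in>linf_ball x (a + b) \<inter> S. ball_fraction S U b y)"
    unfolding ball_fraction_def
  proof (rule sum_mono)
    fix y assume "y \<in> linf_ball x (a + b) \<inter> S"
    then have "lo * N \<le> real (card (linf_ball y b \<inter> S))" "real (card (linf_ball y b \<inter> S)) \<le> hi * N"
      using dense by blast+
    moreover have "0 < lo * N"
      using assms(2,4) by simp
    ultimately show "real (card (linf_ball y b \<inter> U)) / (hi * N) \<le> real (card (linf_ball y b \<inter> U)) / real (card (linf_ball y b \<inter> S))"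
      by (intro divide_left_mono) auto
  qed
  finally show ?thesis .
qed

lemma sum_ball_fraction_le:
  fixes S U :: "(int ^ 'd::finite) set"
  assumes "U \<subseteq> S" "0 < lo" "0 < N" "0 \<le> b"
    and dense: "\<forall>w\<in>S \<inter> linf_ball x (a + b).
      lo * N \<le> real (card (linf_ball w b \<inter> S)) \<and> real (card (linf_ball w b \<inter> S)) \<le> hi * N"
  shows "(\<Sum>y\<in>linf_ball x a \<inter> S. ball_fraction S U b y) \<le> hi / lo * real (card (linf_ball x (a + b) \<inter> U))"
proof -
  have "(\<Sum>y\<in>linf_ball x a \<inter> S. ball_fraction S U b y)
      \<le> (\<Sum>y\<in>linf_ball x a \<inter> S. real (card (linf_ball y b \<inter> U)) / (lo * N))"
    unfolding ball_fraction_def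
  proof (rule sum_mono)
    fix y assume y: "y \<in> linf_ball x a \<inter> S"
    have "y \<in> S \<inter> linf_ball x (a + b)"
      using y assms(4) linf_ball_mono[of a "a + b" x] by auto
    then have "lo * N \<le> real (card (linf_ball y b \<inter> S))"
      using dense by blast
    moreover have "0 < lo * N"
      using assms(2,3) by simp
    ultimately show "real (card (linf_ball y b \<inter> U)) / real (card (linf_ball y b \<inter> S)) \<le> real (card (linf_ball y b \<inter> U)) / (lo * N)"
      by (intro divide_left_mono) auto
  qed
  also have "\<dots> = (\<Sum>y\<in>linf_ball x a \<inter> S. real (card (linf_ball y b \<inter> U))) / (lo * N)"
    by (simp add: sum_divide_distrib)
  also have "\<dots> \<le> (\<Sum>z\<in>linf_ball x (a + b) \<inter> U. real (card (linf_ball z b \<inter> S))) / (lo * N)"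
    using sum_card_linf_ball_inter_le[where A = S and B = U] assms(2,3) by (intro divide_right_mono) (simp_all flip: of_nat_sum)
  also have "\<dots> \<le> (\<Sum>z\<in>linf_ball x (a + b) \<inter> U. hi * N) / (lo * N)"
    using dense assms(1-3) by (intro divide_right_mono sum_mono) auto
  also have "\<dots> = hi / lo * real (card (linf_ball x (a + b) \<inter> U))"
    using assms(2,3) by simp
  finally show ?thesis .
qed

lemma average_ball_fraction_ge:
  fixes S U :: "(int ^ 'd::finite) set" and m k :: nat
  assumes "U \<subseteq> S" "0 < \<alpha>" "\<alpha> < 1/3" "0 < \<eta>" "0 < k" "k \<le> m"
    and dense_m: "(1 - \<alpha>) * \<eta> * real ((2 * m + 1) ^ CARD('d)) \<le> real (card (linf_ball x (real m) \<inter> S))"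
    and dense_k: "\<forall>w\<in>S \<inter> linf_ball x (real (m + k)).
      (1 - \<alpha>) * \<eta> * real ((2 * k + 1) ^ CARD('d)) \<le> real (card (linf_ball w (real k) \<inter> S))
      \<and> real (card (linf_ball w (real k) \<inter> S)) \<le> (1 + \<alpha>) * \<eta> * real ((2 * k + 1) ^ CARD('d))"
  shows "(1 - \<alpha>) / (1 + \<alpha>) * ball_fraction S U (real m) x
      - 3 * real CARD('d) * 2 ^ (CARD('d) - 1) / \<eta> * (real k / real m)
    \<le> (\<Sum>y\<in>linf_ball x (real m) \<inter> S. ball_fraction S U (real k) y) / real (card (linf_ball x (real m) \<inter> S))"
proof -
  have lo: "0 < (1 - \<alpha>) * \<eta>" and hi_ge_lo: "(1 - \<alpha>) * \<eta> \<le> (1 + \<alpha>) * \<eta>"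
    using assms(2-4) by simp_all
  let ?c = "(1 - \<alpha>) / (1 + \<alpha>)"
  let ?E = "2 ^ (CARD('d) - 1) * real CARD('d) * (real k / real m)"
  let ?D = "real ((2 * m + 1) ^ CARD('d))"
  let ?N = "real (card (linf_ball x (real m) \<inter> S))"
  let ?A = "real (card (linf_ball x (real m) \<inter> U))"
  let ?W = "real (card (linf_ball x (real (m - k)) \<inter> U))"
  let ?ann = "real (card (linf_ball x (real (m - k + k)) - linf_ball x (real (m - k))))"
  let ?\<Sigma> = "\<Sum>y\<in>linf_ball x (real m) \<inter> S. ball_fraction S U (real k) y"
  have E0: "0 \<le> ?E"
    by simp
  have m: "real (m - k) + real k = real m" "m - k + k = m"
    using assms(6) by auto
  have "linf_ball x (real m) \<inter> U \<subseteq> (linf_ball x (real (m - k)) \<inter> U) \<union> (linf_ball x (real (m - k + k)) - linf_ball x (real (m - k)))"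
    unfolding m by blast
  then have "card (linf_ball x (real m) \<inter> U)
      \<le> card ((linf_ball x (real (m - k)) \<inter> U) \<union> (linf_ball x (real (m - k + k)) - linf_ball x (real (m - k))))"
    by (intro card_mono) (simp_all add: finite_linf_ball)
  also have "\<dots> \<le> card (linf_ball x (real (m - k)) \<inter> U) + card (linf_ball x (real (m - k + k)) - linf_ball x (real (m - k)))"
    by (rule card_Un_le)
  finally have "?A \<le> ?W + ?ann"
    by (simp flip: of_nat_add)
  moreover have "?ann \<le> ?E * ?D"
    using card_linf_ball_annulus_le[of "m - k" k m x] assms(5,6) by (simp add: ac_simps)
  ultimately have "?A \<le> ?W + ?E * ?D"
    by linarith
  then have "?c * ?A \<le> ?c * (?W + ?E * ?D)"
    by (rule mult_left_mono) (use assms(2,3) in simp)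
  then have "?c * ?A \<le> ?c * ?W + ?c * (?E * ?D)"
    by (simp only: distrib_left)
  moreover have "?c * ?W \<le> ?\<Sigma>"
  proof -
    have "linf_ball x (real (m - k) + real k) \<subseteq> linf_ball x (real (m + k))"
      unfolding m by (rule linf_ball_mono) simp
    then have "(1 - \<alpha>) * \<eta> / ((1 + \<alpha>) * \<eta>) * ?W
        \<le> (\<Sum>y\<in>linf_ball x (real (m - k) + real k) \<inter> S. ball_fraction S U (real k) y)"
      using dense_k by (intro sum_ball_fraction_ge[OF assms(1) lo hi_ge_lo]) auto
    then show ?thesis
      using assms(4) unfolding m by simp
  qed
  ultimately have "?c * ?A - ?\<Sigma> \<le> ?c * (?E * ?D)"
    by linarith
  moreover have "0 < (1 - \<alpha>) * \<eta> * ?D"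
    using assms(3,4) by simp
  then have "0 < ?N"
    using dense_m by linarith
  ultimately have "(?c * ?A - ?\<Sigma>) / ?N \<le> ?c * (?E * ?D) / ((1 - \<alpha>) * \<eta> * ?D)"
    using dense_m assms(2-4) by (intro frac_le) auto
  also have "\<dots> = ?E / ((1 + \<alpha>) * \<eta>)"
    using assms(2-4) by (simp add: ac_simps)
  also have "\<dots> \<le> ?E / \<eta>"
    using assms(2,4) by (intro divide_left_mono) auto
  also have "\<dots> \<le> 3 * ?E / \<eta>"
    using E0 assms(4) by (intro divide_right_mono) linarith+
  finally show ?thesis
    unfolding ball_fraction_def[of S U "real m" x] diff_divide_distrib
    by (simp add: ac_simps)
qed

lemma average_ball_fraction_le:
  fixes S U :: "(int ^ 'd::finite) set" and m k :: nat
  assumes "U \<subseteq> S" "0 < \<alpha>" "\<alpha> < 1/3" "0 < \<eta>" "0 < k" "k \<le> m"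
    and dense_m: "(1 - \<alpha>) * \<eta> * real ((2 * m + 1) ^ CARD('d)) \<le> real (card (linf_ball x (real m) \<inter> S))"
    and dense_k: "\<forall>w\<in>S \<inter> linf_ball x (real (m + k)).
      (1 - \<alpha>) * \<eta> * real ((2 * k + 1) ^ CARD('d)) \<le> real (card (linf_ball w (real k) \<inter> S))
      \<and> real (card (linf_ball w (real k) \<inter> S)) \<le> (1 + \<alpha>) * \<eta> * real ((2 * k + 1) ^ CARD('d))"
  shows "(\<Sum>y\<in>linf_ball x (real m) \<inter> S. ball_fraction S U (real k) y) / real (card (linf_ball x (real m) \<inter> S))
    \<le> (1 + \<alpha>) / (1 - \<alpha>) * ball_fraction S U (real m) x
      + 3 * real CARD('d) * 2 ^ (CARD('d) - 1) / \<eta> * (real k / real m)"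
proof -
  have lo: "0 < (1 - \<alpha>) * \<eta>"
    using assms(3,4) by simp
  let ?C = "(1 + \<alpha>) / (1 - \<alpha>)"
  let ?E = "2 ^ (CARD('d) - 1) * real CARD('d) * (real k / real m)"
  let ?D = "real ((2 * m + 1) ^ CARD('d))"
  let ?N = "real (card (linf_ball x (real m) \<inter> S))"
  let ?A = "real (card (linf_ball x (real m) \<inter> U))"
  let ?W = "real (card (linf_ball x (real (m + k)) \<inter> U))"
  let ?ann = "real (card (linf_ball x (real (m + k)) - linf_ball x (real m)))"
  let ?\<Sigma> = "\<Sum>y\<in>linf_ball x (real m) \<inter> S. ball_fraction S U (real k) y"
  have E0: "0 \<le> ?E"
    by simp
  have "linf_ball x (real (m + k)) \<inter> U \<subseteq> (linf_ball x (real m) \<inter> U) \<union> (linf_ball x (real (m + k)) - linf_ball x (real m))"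
    by blast
  then have "card (linf_ball x (real (m + k)) \<inter> U)
      \<le> card ((linf_ball x (real m) \<inter> U) \<union> (linf_ball x (real (m + k)) - linf_ball x (real m)))"
    by (intro card_mono) (simp_all add: finite_linf_ball)
  also have "\<dots> \<le> card (linf_ball x (real m) \<inter> U) + card (linf_ball x (real (m + k)) - linf_ball x (real m))"
    by (rule card_Un_le)
  finally have "?W \<le> ?A + ?ann"
    by (simp flip: of_nat_add)
  moreover have "?ann \<le> ?E * ?D"
    using card_linf_ball_annulus_le[of m k m x] assms(5,6) by (simp add: ac_simps)
  ultimately have "?W \<le> ?A + ?E * ?D"
    by linarith
  then have "?C * ?W \<le> ?C * (?A + ?E * ?D)"
    by (rule mult_left_mono) (use assms(2,3) in simp)
  then have "?C * ?W \<le> ?C * ?A + ?C * (?E * ?D)"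
    by (simp only: distrib_left)
  moreover have "?\<Sigma> \<le> ?C * ?W"
  proof -
    have "?\<Sigma> \<le> (1 + \<alpha>) * \<eta> / ((1 - \<alpha>) * \<eta>) * real (card (linf_ball x (real m + real k) \<inter> U))"
      using dense_k by (intro sum_ball_fraction_le[OF assms(1) lo, where N = "real ((2 * k + 1) ^ CARD('d))"]) auto
    then show ?thesis
      using assms(4) by simp
  qed
  ultimately have "?\<Sigma> - ?C * ?A \<le> ?C * (?E * ?D)"
    by linarith
  moreover have "0 < (1 - \<alpha>) * \<eta> * ?D"
    using assms(3,4) by simp
  ultimately have "(?\<Sigma> - ?C * ?A) / ?N \<le> ?C * (?E * ?D) / ((1 - \<alpha>) * \<eta> * ?D)"
    using dense_m assms(2-4) E0 by (intro frac_le) auto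
  also have "\<dots> = ?C * ?E / ((1 - \<alpha>) * \<eta>)"
    using \<open>0 < (1 - \<alpha>) * \<eta> * ?D\<close> by simp
  also have "\<dots> = ?C / (1 - \<alpha>) * (?E / \<eta>)"
    by simp
  also have "\<dots> \<le> 3 * (?E / \<eta>)"
  proof (rule mult_right_mono)
    have "0 \<le> (1 - 3 * \<alpha>) * (2 - \<alpha>)"
      using assms(3) by (intro mult_nonneg_nonneg) auto
    then have "1 + \<alpha> \<le> 3 * ((1 - \<alpha>) * (1 - \<alpha>))"
      by (simp add: algebra_simps)
    then show "?C / (1 - \<alpha>) \<le> 3"
      using assms(3) by (simp add: pos_divide_le_eq)
  qed (use E0 assms(4) in simp)
  finally show ?thesis
    unfolding ball_fraction_def[of S U "real m" x] diff_divide_distrib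
    by (simp add: ac_simps)
qed

lemma average_ball_fraction_S_inf_bounds:
  fixes \<omega> :: "('d::finite) config" and m k :: nat
  assumes fin: "R_den_finite \<eta> \<kappa> \<Delta> \<alpha> \<omega>" and \<kappa>: "0 < \<kappa>" and \<Delta>: "0 < \<Delta>" and \<eta>: "0 < \<eta>"
    and \<alpha>: "0 < \<alpha>" "\<alpha> < 1/3" and k: "R_den \<eta> \<kappa> \<Delta> \<alpha> \<omega> \<le> real k" "0 < k" "k \<le> m"
    and x: "x \<in> S_inf \<omega> \<inter> linf_ball 0 (r_scale \<kappa> \<Delta> (real k) - real m - real k)"
    and U: "U \<subseteq> S_inf \<omega>"
  shows "(1 - \<alpha>) / (1 + \<alpha>) * ball_fraction (S_inf \<omega>) U (real m) x
      - 3 * real CARD('d) * 2 ^ (CARD('d) - 1) / \<eta> * (real k / real m)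
    \<le> (\<Sum>y\<in>linf_ball x (real m) \<inter> S_inf \<omega>. ball_fraction (S_inf \<omega>) U (real k) y)
      / real (card (linf_ball x (real m) \<inter> S_inf \<omega>))
    \<and> (\<Sum>y\<in>linf_ball x (real m) \<inter> S_inf \<omega>. ball_fraction (S_inf \<omega>) U (real k) y)
      / real (card (linf_ball x (real m) \<inter> S_inf \<omega>))
    \<le> (1 + \<alpha>) / (1 - \<alpha>) * ball_fraction (S_inf \<omega>) U (real m) x
      + 3 * real CARD('d) * 2 ^ (CARD('d) - 1) / \<eta> * (real k / real m)"
proof -
  have "r_scale \<kappa> \<Delta> (real k) \<le> r_scale \<kappa> \<Delta> (real m)"
    using \<kappa> \<Delta> k by (intro r_scale_mono) auto
  then have "linf_ball 0 (r_scale \<kappa> \<Delta> (real k) - real m - real k) \<subseteq> linf_ball 0 (r_scale \<kappa> \<Delta> (real m))"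
    by (intro linf_ball_mono) linarith
  then have dense_m: "(1 - \<alpha>) * \<eta> * real ((2 * m + 1) ^ CARD('d)) \<le> real (card (linf_ball x (real m) \<inter> S_inf \<omega>))"
    using card_S_inf_linf_ball_bounds(1)[OF fin \<kappa> \<Delta>, of m x] k x by auto
  have "w \<in> linf_ball 0 (r_scale \<kappa> \<Delta> (real k))" if "w \<in> linf_ball x (real (m + k))" for w
    using linf_ball_triangle[of x 0 "r_scale \<kappa> \<Delta> (real k) - real m - real k", OF _ that] x by simp
  then have dense_k: "\<forall>w\<in>S_inf \<omega> \<inter> linf_ball x (real (m + k)).
      (1 - \<alpha>) * \<eta> * real ((2 * k + 1) ^ CARD('d)) \<le> real (card (linf_ball w (real k) \<inter> S_inf \<omega>))
    \<and> real (card (linf_ball w (real k) \<inter> S_inf \<omega>)) \<le> (1 + \<alpha>) * \<eta> * real ((2 * k + 1) ^ CARD('d))"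
    using card_S_inf_linf_ball_bounds[OF fin \<kappa> \<Delta> k(1)] by blast
  show ?thesis
    using average_ball_fraction_ge[OF U \<alpha> \<eta> k(2,3) dense_m dense_k]
      average_ball_fraction_le[OF U \<alpha> \<eta> k(2,3) dense_m dense_k]
    by (rule conjI)
qed

theorem lemma4p3:
  fixes U :: "real set"
    and P :: "real \<Rightarrow> ('d::finite) config measure"
    and f_S :: "real \<Rightarrow> real \<Rightarrow> real"
    and \<Delta>_S :: "real \<Rightarrow> real"
    and \<kappa>_reg :: "real \<Rightarrow> real"
    and u \<alpha> :: real
    and \<omega> :: "'d config"
    and U0 :: "(int ^ 'd) set"
    and l l' :: int
  assumes dim: "CARD('d) \<ge> 3"
    and U_interval: "is_interval U" "open U" "U \<noteq> {}"
    and meas: "config_measures U P"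
    and P1: "axiom_P1 U P"
    and P2: "axiom_P2 U P"
    and D: "axiom_D U P"
    and S1: "axiom_S1 U P f_S \<Delta>_S"
    and S2: "axiom_S2 U P"
    and u: "u \<in> U"
    and kappa_pos: "\<forall>a. \<kappa>_reg a > 0"
    and alpha: "0 < \<alpha>" "\<alpha> < 1/3"
    and Sinf_ne: "S_inf \<omega> \<noteq> {}"
    and Sinf_conn: "set_connected (S_inf \<omega>)"
    and Rden_fin: "R_den_finite (eta P u) (\<kappa>_reg \<alpha>) (\<Delta>_S u) \<alpha> \<omega>"
    and U0: "U0 \<subseteq> S_inf \<omega>"
    and ll': "l > l'"
    and scales: "2 powr real_of_int l' \<ge> R_den (eta P u) (\<kappa>_reg \<alpha>) (\<Delta>_S u) \<alpha> \<omega>"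
    and rpos: "r_scale (\<kappa>_reg \<alpha>) (\<Delta>_S u) (2 powr real_of_int l')
                 - 2 powr real_of_int l - 2 powr real_of_int l' > 0"
  shows
    "(\<forall>x z. x \<in> S_inf \<omega> \<inter> linf_ball 0 (r_scale (\<kappa>_reg \<alpha>) (\<Delta>_S u) (2 powr real_of_int l)) \<and>
           z \<in> S_inf \<omega> \<inter> linf_ball 0 (r_scale (\<kappa>_reg \<alpha>) (\<Delta>_S u) (2 powr real_of_int l)) \<and>
           conn_in (S_inf \<omega> \<inter> linf_ball 0 (r_scale (\<kappa>_reg \<alpha>) (\<Delta>_S u) (2 powr real_of_int l))) x z
       \<longrightarrow> \<bar>sigma \<omega> U0 l x - sigma \<omega> U0 l z\<bar>
           \<le> (6 * 2 powr (- real_of_int l) / eta P u)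
              * real (graph_dist (S_inf \<omega> \<inter> linf_ball 0 (r_scale (\<kappa>_reg \<alpha>) (\<Delta>_S u) (2 powr real_of_int l))) x z))
     \<and>
     (\<forall>x \<in> S_inf \<omega> \<inter> linf_ball 0 (r_scale (\<kappa>_reg \<alpha>) (\<Delta>_S u) (2 powr real_of_int l')
                                     - 2 powr real_of_int l - 2 powr real_of_int l').
        (1 - \<alpha>) / (1 + \<alpha>) * sigma \<omega> U0 l x
          - (3 * real CARD('d) * 2 ^ (CARD('d) - 1) / eta P u) * 2 powr (real_of_int (l' - l))
        \<le> avg \<omega> (sigma \<omega> U0 l') x l \<and>
        avg \<omega> (sigma \<omega> U0 l') x l
        \<le> (1 + \<alpha>) / (1 - \<alpha>) * sigma \<omega> U0 l x
          + (3 * real CARD('d) * 2 ^ (CARD('d) - 1) / eta P u) * 2 powr (real_of_int (l' - l)))"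
  (is "?lipschitz \<and> ?averages")
proof -
  have \<eta>: "0 < eta P u"
    using S2 u unfolding axiom_S2_def by blast
  have \<Delta>: "0 < \<Delta>_S u"
    using S1 u unfolding axiom_S1_def by blast
  have \<kappa>: "0 < \<kappa>_reg \<alpha>"
    using kappa_pos by blast
  have "1 \<le> 2 powr real_of_int l'"
    using scales R_den_ge_1[OF Rden_fin] by linarith
  then have "0 \<le> l'"
    using powr_less_one[of 2 "real_of_int l'"] by fastforce
  define m k where "m = (2::nat) ^ nat l" and "k = (2::nat) ^ nat l'"
  have lm: "2 powr real_of_int l = real m" and lk: "2 powr real_of_int l' = real k"
    using \<open>0 \<le> l'\<close> ll' by (simp_all add: m_def k_def powr_int)
  have "0 < k" "k \<le> m"
    using ll' unfolding k_def m_def by (auto intro: power_increasing)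
  have Rk: "R_den (eta P u) (\<kappa>_reg \<alpha>) (\<Delta>_S u) \<alpha> \<omega> \<le> real k"
    using scales lk by simp
  then have Rm: "R_den (eta P u) (\<kappa>_reg \<alpha>) (\<Delta>_S u) \<alpha> \<omega> \<le> real m"
    using \<open>k \<le> m\<close> by linarith
  have lipschitz_const: "6 * 2 powr (- real_of_int l) / eta P u = 6 / (eta P u * real m)"
    by (simp add: powr_minus lm divide_inverse)
  have ?lipschitz
    unfolding sigma_eq_ball_fraction lm lipschitz_const
    using card_S_inf_linf_ball_bounds(1)[OF Rden_fin \<kappa> \<Delta> Rm] \<open>0 < k\<close> \<open>k \<le> m\<close>
    by (intro allI impI ball_fraction_graph_lipschitz[OF _ alpha(2) \<eta>]) auto
  have averages_const: "3 * real CARD('d) * 2 ^ (CARD('d) - 1) / eta P u * 2 powr real_of_int (l' - l)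
      = 3 * real CARD('d) * 2 ^ (CARD('d) - 1) / eta P u * (real k / real m)"
    by (simp add: powr_diff lm lk)
  have ?averages
    unfolding avg_def sigma_eq_ball_fraction lm lk averages_const
    by (intro ballI average_ball_fraction_S_inf_bounds[OF Rden_fin \<kappa> \<Delta> \<eta> alpha Rk \<open>0 < k\<close> \<open>k \<le> m\<close>])
      (simp_all add: Diff_subset)
  with \<open>?lipschitz\<close> show ?thesis ..
qed

end
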